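(* Let $G$ be a graph with vertices $a,b,c,\alpha,\beta,\gamma$. Suppose there is perfect state transfer between $e_a-e_b$ and $e_\alpha-e_\beta$ at time $\tau$ in $G$, and there is also perfect state transfer between $e_b-e_c$ and $e_\beta-e_\gamma$ at the same time $\tau$ in $G$. Then there is perfect state transfer between $e_a-e_c$ and $e_\alpha-e_\gamma$ at time $\tau$ in $G$.
   Context: For a graph $G$ with Laplacian $L=\Delta-A$ ($\Delta$ degree matrix, $A$ adjacency matrix), $U(t)=\exp(itL)$. Perfect state transfer between $e_x-e_y$ and $e_z-e_w$ at time $\tau$ means $U(\tau)(e_x-e_y)=\lambda(e_z-e_w)$ for some $\lambda\in\mathbb{C}$ with $|\lambda|=1$; here $e_v$ is the standard basis vector of vertex $v$. *)

theory Defs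
  imports "HOL-Analysis.Analysis"
begin

definition simple_graph :: "('n::finite \<Rightarrow> 'n \<Rightarrow> bool) \<Rightarrow> bool" where
  "simple_graph E \<longleftrightarrow> (\<forall>x y. E x y \<longrightarrow> E y x) \<and> (\<forall>x. \<not> E x x)"

definition adjacency_matrix :: "('n::finite \<Rightarrow> 'n \<Rightarrow> bool) \<Rightarrow> complex^'n^'n" where
  "adjacency_matrix E = (\<chi> i j. if E i j then 1 else 0)"

definition degree_matrix :: "('n::finite \<Rightarrow> 'n \<Rightarrow> bool) \<Rightarrow> complex^'n^'n" where
  "degree_matrix E = (\<chi> i j. if i = j then of_nat (card {k. E i k}) else 0)"

definition laplacian :: "('n::finite \<Rightarrow> 'n \<Rightarrow> bool) \<Rightarrow> complex^'n^'n" where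
  "laplacian E = degree_matrix E - adjacency_matrix E"

definition matpow :: "complex^'n^'n \<Rightarrow> nat \<Rightarrow> complex^'n^'n" where
  "matpow A k = ((\<lambda>M. A ** M) ^^ k) (mat 1)"

definition mat_exp :: "complex^'n^'n \<Rightarrow> complex^'n^'n" where
  "mat_exp A = (\<Sum>k. scaleR (1 / fact k :: real) (matpow A k))"

definition cmat_scale :: "complex \<Rightarrow> complex^'n^'m \<Rightarrow> complex^'n^'m" where
  "cmat_scale c A = (\<chi> i j. c * A $ i $ j)"

definition transition :: "('n::finite \<Rightarrow> 'n \<Rightarrow> bool) \<Rightarrow> real \<Rightarrow> complex^'n^'n" where
  "transition E t = mat_exp (cmat_scale (\<i> * complex_of_real t) (laplacian E))"

definition basis_vec :: "'n::finite \<Rightarrow> complex^'n" where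
  "basis_vec v = axis v 1"

definition pair_pst :: "('n::finite \<Rightarrow> 'n \<Rightarrow> bool) \<Rightarrow> 'n \<Rightarrow> 'n \<Rightarrow> 'n \<Rightarrow> 'n \<Rightarrow> real \<Rightarrow> bool" where
  "pair_pst E x y z w tau \<longleftrightarrow>
     (\<exists>lam::complex. cmod lam = 1 \<and>
        transition E tau *v (basis_vec x - basis_vec y) = lam *s (basis_vec z - basis_vec w))"

end

theory Submission
  imports Defs
begin

text \<open>The Laplacian of a simple graph is real symmetric, so U(t) = exp(itL) is unitary and
preserves the Hermitian inner product. Write U(e_a - e_b) = l1 (e_alpha - e_beta) and
U(e_b - e_c) = l2 (e_beta - e_gamma). Comparing norms gives a = b iff alpha = beta and
b = c iff beta = gamma, and these degenerate cases are immediate. Otherwise the inner product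
of e_a - e_b with e_b - e_c is -(1 + [a = c]), and that of the images is
cnj l1 * l2 * -(1 + [alpha = gamma]); taking moduli gives [a = c] = [alpha = gamma], hence
l1 = l2, and by linearity U(e_a - e_c) = l1 (e_alpha - e_gamma).\<close>

lemma matpow_0 [simp]: "matpow A 0 = mat 1"
  by (simp add: matpow_def)

lemma matpow_Suc: "matpow A (Suc k) = A ** matpow A k"
  by (simp add: matpow_def)

lemma matpow_add: "matpow A (k + m) = matpow A k ** matpow A m"
  by (induction k) (simp_all add: matpow_Suc matrix_mul_assoc)

lemma matpow_Suc_right: "matpow A (Suc k) = matpow A k ** A"
  using matpow_add[of A k 1] by (simp add: matpow_Suc)

lemma cmat_scale_matrix_mult: "cmat_scale a A ** cmat_scale b B = cmat_scale (a * b) (A ** B)"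
  by (simp add: vec_eq_iff cmat_scale_def matrix_matrix_mult_def sum_distrib_left mult_ac)

lemma matpow_cmat_scale: "matpow (cmat_scale c A) k = cmat_scale (c ^ k) (matpow A k)"
  by (induction k)
    (simp_all add: matpow_Suc cmat_scale_matrix_mult, simp add: cmat_scale_def vec_eq_iff mat_def)

lemma norm_matpow_entry_le:
  fixes A :: "complex^'n::finite^'n"
  defines "M \<equiv> (\<Sum>i\<in>UNIV. \<Sum>j\<in>UNIV. cmod (A $ i $ j))"
  shows "cmod (matpow A k $ i $ j) \<le> M ^ k"
proof (induction k arbitrary: i j)
  case 0
  then show ?case by (simp add: mat_def)
next
  case (Suc k)
  have row: "(\<Sum>l\<in>UNIV. cmod (A $ i $ l)) \<le> M"
    unfolding M_def by (rule member_le_sum) (auto intro: sum_nonneg)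
  have "cmod (matpow A (Suc k) $ i $ j) \<le> (\<Sum>l\<in>UNIV. cmod (A $ i $ l) * cmod (matpow A k $ l $ j))"
    unfolding matpow_Suc matrix_matrix_mult_def vec_lambda_beta norm_mult[symmetric]
    by (rule norm_sum)
  also have "\<dots> \<le> (\<Sum>l\<in>UNIV. cmod (A $ i $ l)) * M ^ k"
    unfolding sum_distrib_right by (intro sum_mono mult_left_mono Suc) simp
  also have "\<dots> \<le> M * M ^ k"
    using row by (rule mult_right_mono) (simp add: M_def sum_nonneg)
  finally show ?case by simp
qed

lemma summable_norm_exp_series_entry:
  fixes A :: "complex^'n::finite^'n"
  shows "summable (\<lambda>k. norm (c ^ k /\<^sub>R fact k * matpow A k $ i $ j))"
proof -
  define M where "M = (\<Sum>i\<in>UNIV. \<Sum>j\<in>UNIV. cmod (A $ i $ j))"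
  show ?thesis
  proof (rule summable_comparison_test'[OF summable_exp[of "cmod c * M"]])
    fix k
    have "norm (norm (c ^ k /\<^sub>R fact k * matpow A k $ i $ j))
        = inverse (fact k) * cmod c ^ k * cmod (matpow A k $ i $ j)"
      by (simp add: norm_mult norm_power field_simps)
    also have "\<dots> \<le> inverse (fact k) * cmod c ^ k * M ^ k"
      unfolding M_def by (intro mult_left_mono norm_matpow_entry_le) simp
    finally show "norm (norm (c ^ k /\<^sub>R fact k * matpow A k $ i $ j))
        \<le> inverse (fact k) * (cmod c * M) ^ k"
      by (simp add: power_mult_distrib mult_ac)
  qed
qed

lemma mat_exp_entry_sums:
  fixes A :: "complex^'n::finite^'n"
  shows "(\<lambda>k. c ^ k /\<^sub>R fact k * matpow A k $ i $ j) sums (mat_exp (cmat_scale c A) $ i $ j)"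
proof -
  define f where "f k = scaleR (1 / fact k :: real) (matpow (cmat_scale c A) k)" for k
  have f_entry: "f k $ i $ j = c ^ k /\<^sub>R fact k * matpow A k $ i $ j" for k i j
    by (simp only: f_def vector_scaleR_component matpow_cmat_scale)
      (simp add: cmat_scale_def inverse_eq_divide)
  have summable_entry: "summable (\<lambda>k. f k $ i $ j)" for i j
    unfolding f_entry by (rule summable_norm_cancel[OF summable_norm_exp_series_entry])
  have "(\<Sum>k<n. f k) = (\<chi> i j. \<Sum>k<n. f k $ i $ j)" for n
    by (simp add: vec_eq_iff sum_component)
  then have "f sums (\<chi> i j. \<Sum>k. f k $ i $ j)"
    unfolding sums_def by (simp only:) (intro tendsto_vec_lambda summable_LIMSEQ summable_entry)
  then have "mat_exp (cmat_scale c A) $ i $ j = (\<Sum>k. f k $ i $ j)"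
    unfolding mat_exp_def f_def[symmetric] by (simp add: sums_unique[symmetric])
  with summable_entry show ?thesis
    by (simp add: summable_sums f_entry)
qed

lemma mat_exp_zero: "mat_exp (cmat_scale 0 A) = mat 1"
proof -
  have "(\<lambda>k. 0 ^ k /\<^sub>R fact k * matpow A k $ i $ j) sums (mat 1 $ i $ j)" for i j
    using powser_sums_zero[of "\<lambda>k. matpow A k $ i $ j /\<^sub>R fact k"] by (simp add: mult_ac)
  then show ?thesis
    using mat_exp_entry_sums[of 0 A] by (simp add: vec_eq_iff) (blast intro: sums_unique2)
qed

lemma mat_exp_add:
  fixes A :: "complex^'n::finite^'n"
  shows "mat_exp (cmat_scale s A) ** mat_exp (cmat_scale t A) = mat_exp (cmat_scale (s + t) A)"
proof -
  define S where "S x k = x ^ k /\<^sub>R fact k" for x :: complex and k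
  define P where "P = matpow A"
  have entry: "mat_exp (cmat_scale x A) $ i $ j = (\<Sum>k. S x k * P k $ i $ j)" for x i j
    unfolding S_def P_def by (rule sums_unique[OF mat_exp_entry_sums])
  have "(\<lambda>n. \<Sum>k\<le>n. (S s k * P k $ i $ l) * (S t (n - k) * P (n - k) $ l $ j))
      sums (mat_exp (cmat_scale s A) $ i $ l * mat_exp (cmat_scale t A) $ l $ j)" for i l j
    unfolding entry S_def P_def by (intro Cauchy_product_sums summable_norm_exp_series_entry)
  then have "(\<lambda>n. \<Sum>l\<in>UNIV. \<Sum>k\<le>n. (S s k * P k $ i $ l) * (S t (n - k) * P (n - k) $ l $ j))
      sums (mat_exp (cmat_scale s A) ** mat_exp (cmat_scale t A)) $ i $ j" for i j
    unfolding matrix_matrix_mult_def vec_lambda_beta by (intro sums_sum)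
  moreover have "(\<Sum>l\<in>UNIV. \<Sum>k\<le>n. (S s k * P k $ i $ l) * (S t (n - k) * P (n - k) $ l $ j))
      = S (s + t) n * P n $ i $ j" for n i j
  proof -
    have "(\<Sum>l\<in>UNIV. \<Sum>k\<le>n. (S s k * P k $ i $ l) * (S t (n - k) * P (n - k) $ l $ j))
        = (\<Sum>k\<le>n. S s k * S t (n - k) * (P k ** P (n - k)) $ i $ j)"
      by (subst sum.swap) (simp add: matrix_matrix_mult_def sum_distrib_left mult_ac)
    also have "\<dots> = (\<Sum>k\<le>n. S s k * S t (n - k)) * P n $ i $ j"
      by (simp add: P_def sum_distrib_right flip: matpow_add)
    finally show ?thesis
      by (simp add: S_def exp_series_add_commuting)
  qed
  ultimately have "(\<lambda>n. S (s + t) n * P n $ i $ j)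
      sums (mat_exp (cmat_scale s A) ** mat_exp (cmat_scale t A)) $ i $ j" for i j
    by simp
  then show ?thesis
    using mat_exp_entry_sums[of "s + t" A] unfolding S_def P_def vec_eq_iff
    by (blast intro: sums_unique2)
qed

definition cadjoint :: "complex^'n^'m \<Rightarrow> complex^'m^'n" where
  "cadjoint A = (\<chi> i j. cnj (A $ j $ i))"

definition hermitian :: "complex^'n^'n \<Rightarrow> bool" where
  "hermitian A \<longleftrightarrow> cadjoint A = A"

definition unitary :: "complex^'n^'n \<Rightarrow> bool" where
  "unitary U \<longleftrightarrow> cadjoint U ** U = mat 1"

lemma cadjoint_component [simp]: "cadjoint A $ i $ j = cnj (A $ j $ i)"
  by (simp add: cadjoint_def)

lemma cadjoint_matrix_mult: "cadjoint (A ** B) = cadjoint B ** cadjoint A"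
  by (simp add: vec_eq_iff matrix_matrix_mult_def mult.commute)

lemma cadjoint_matpow: "cadjoint (matpow A k) = matpow (cadjoint A) k"
proof (induction k)
  case 0
  then show ?case by (simp add: vec_eq_iff mat_def)
next
  case (Suc k)
  then show ?case
    by (simp only: matpow_Suc[of A] matpow_Suc_right[of "cadjoint A"] cadjoint_matrix_mult)
qed

lemma cadjoint_mat_exp:
  fixes A :: "complex^'n::finite^'n"
  shows "cadjoint (mat_exp (cmat_scale c A)) = mat_exp (cmat_scale (cnj c) (cadjoint A))"
proof -
  have "(\<lambda>k. cnj (c ^ k /\<^sub>R fact k * matpow A k $ j $ i))
      sums cnj (mat_exp (cmat_scale c A) $ j $ i)" for i j
    using mat_exp_entry_sums[of c A j i] by (simp only: sums_cnj)
  then have "(\<lambda>k. cnj c ^ k /\<^sub>R fact k * matpow (cadjoint A) k $ i $ j)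
      sums cnj (mat_exp (cmat_scale c A) $ j $ i)" for i j
    by (simp flip: cadjoint_matpow)
  then show ?thesis
    using mat_exp_entry_sums[of "cnj c" "cadjoint A"]
    by (simp add: vec_eq_iff) (blast intro: sums_unique2)
qed

lemma unitary_mat_exp:
  fixes A :: "complex^'n::finite^'n"
  assumes "hermitian A" and "cnj c = - c"
  shows "unitary (mat_exp (cmat_scale c A))"
  using mat_exp_add[of "cnj c" A c] assms
  by (simp add: unitary_def hermitian_def cadjoint_mat_exp mat_exp_zero)

lemma hermitian_laplacian: "simple_graph E \<Longrightarrow> hermitian (laplacian E)"
  by (auto simp: hermitian_def vec_eq_iff laplacian_def degree_matrix_def adjacency_matrix_def
      simple_graph_def)

lemma unitary_transition: "simple_graph E \<Longrightarrow> unitary (transition E t)"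
  unfolding transition_def by (intro unitary_mat_exp hermitian_laplacian) simp_all

definition cinner :: "complex^'n::finite \<Rightarrow> complex^'n \<Rightarrow> complex" where
  "cinner v w = (\<Sum>j\<in>UNIV. cnj (v $ j) * w $ j)"

lemma cinner_diff_left: "cinner (u - v) w = cinner u w - cinner v w"
  by (simp add: cinner_def algebra_simps sum_subtractf)

lemma cinner_diff_right: "cinner u (v - w) = cinner u v - cinner u w"
  by (simp add: cinner_def algebra_simps sum_subtractf)

lemma cinner_basis_vec_left: "cinner (basis_vec x) w = w $ x"
proof -
  have "cnj (basis_vec x $ j) * w $ j = (if j = x then w $ j else 0)" for j
    by (simp add: basis_vec_def axis_def)
  then show ?thesis
    by (simp add: cinner_def)
qed

lemma cinner_basis_vec: "cinner (basis_vec x) (basis_vec y) = of_bool (x = y)"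
  unfolding cinner_basis_vec_left by (simp add: basis_vec_def axis_def)

lemma cinner_matrix_vector_mult_left: "cinner (U *v v) w = cinner v (cadjoint U *v w)"
proof -
  have "cinner (U *v v) w = (\<Sum>i\<in>UNIV. \<Sum>j\<in>UNIV. cnj (U $ i $ j) * cnj (v $ j) * w $ i)"
    by (simp add: cinner_def matrix_vector_mult_def sum_distrib_right)
  also have "\<dots> = (\<Sum>j\<in>UNIV. \<Sum>i\<in>UNIV. cnj (v $ j) * (cnj (U $ i $ j) * w $ i))"
    by (subst sum.swap) (simp add: mult_ac)
  also have "\<dots> = cinner v (cadjoint U *v w)"
    by (simp add: cinner_def matrix_vector_mult_def sum_distrib_left)
  finally show ?thesis .
qed

lemma unitary_cinner: "unitary U \<Longrightarrow> cinner (U *v v) (U *v w) = cinner v w"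
  by (simp add: unitary_def cinner_matrix_vector_mult_left matrix_vector_mul_assoc)

lemma cinner_basis_vec_diff:
  "cinner (basis_vec x - basis_vec y) (basis_vec z - basis_vec w)
    = of_bool (x = z) - of_bool (x = w) - of_bool (y = z) + of_bool (y = w)"
  by (simp add: cinner_diff_left cinner_diff_right cinner_basis_vec)

lemma cinner_scale: "cinner (a *s v) (b *s w) = cnj a * b * cinner v w"
  by (simp add: cinner_def sum_distrib_left mult_ac)

lemma isometry_difference_transfer_trans:
  fixes U :: "complex^'n::finite^'n"
  assumes isometry: "\<And>v w. cinner (U *v v) (U *v w) = cinner v w"
    and l1: "cmod l1 = 1" "U *v (basis_vec a - basis_vec b) = l1 *s (basis_vec \<alpha> - basis_vec \<beta>)"
    and l2: "cmod l2 = 1" "U *v (basis_vec b - basis_vec c) = l2 *s (basis_vec \<beta> - basis_vec \<gamma>)"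
  shows "\<exists>l. cmod l = 1 \<and> U *v (basis_vec a - basis_vec c) = l *s (basis_vec \<alpha> - basis_vec \<gamma>)"
proof -
  define e where "e = (basis_vec :: 'n \<Rightarrow> complex^'n)"
  have e_diff: "cinner (e x - e y) (e z - e w)
      = of_bool (x = z) - of_bool (x = w) - of_bool (y = z) + of_bool (y = w)" for x y z w
    unfolding e_def by (rule cinner_basis_vec_diff)
  note transfer1 = l1(2)[folded e_def] and transfer2 = l2(2)[folded e_def]
  have e_norm: "cinner (e x - e y) (e x - e y) = 2 - 2 * of_bool (x = y)" for x y
    using e_diff[of x y x y] by (cases "x = y") simp_all
  have phase: "cnj l * l = 1" if "cmod l = 1" for l
    using complex_norm_square[of l] that by (simp add: mult.commute)
  have image: "U *v (e a - e c) = l1 *s (e \<alpha> - e \<beta>) + l2 *s (e \<beta> - e \<gamma>)"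
    using transfer1 transfer2 matrix_vector_right_distrib[of U "e a - e b" "e b - e c"] by simp
  have gram:
    "cinner (e x - e y) (e x' - e y') = cnj l * l' * cinner (e \<xi> - e \<eta>) (e \<xi>' - e \<eta>')"
    if "U *v (e x - e y) = l *s (e \<xi> - e \<eta>)" "U *v (e x' - e y') = l' *s (e \<xi>' - e \<eta>')"
    for x y x' y' \<xi> \<eta> \<xi>' \<eta>' l l'
    using isometry[of "e x - e y" "e x' - e y'"] unfolding that cinner_scale by (rule sym)
  have ab: "a = b \<longleftrightarrow> \<alpha> = \<beta>"
    using gram[OF transfer1 transfer1] by (simp add: phase[OF l1(1)] e_norm of_bool_eq_iff)
  have bc: "b = c \<longleftrightarrow> \<beta> = \<gamma>"
    using gram[OF transfer2 transfer2] by (simp add: phase[OF l2(1)] e_norm of_bool_eq_iff)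
  consider "a = b" | "b = c" | "a \<noteq> b" "b \<noteq> c" by blast
  then have "\<exists>l. cmod l = 1 \<and> U *v (e a - e c) = l *s (e \<alpha> - e \<gamma>)"
  proof cases
    case 1
    then show ?thesis using image ab l2(1) by auto
  next
    case 2
    then show ?thesis using image bc l1(1) by auto
  next
    case 3
    have cross: "- of_bool (a = c) - 1 = cnj l1 * l2 * (- of_bool (\<alpha> = \<gamma>) - 1)"
      using gram[OF transfer1 transfer2] 3 ab bc by (simp add: e_diff)
    have "cmod (- of_bool (a = c) - 1 :: complex) = cmod (- of_bool (\<alpha> = \<gamma>) - 1 :: complex)"
      using arg_cong[OF cross, of cmod] l1(1) l2(1)
      by (simp only: norm_mult complex_mod_cnj mult_1_left)
    then have "a = c \<longleftrightarrow> \<alpha> = \<gamma>"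
      by (cases "a = c"; cases "\<alpha> = \<gamma>") simp_all
    with cross have "cnj l1 * l2 = 1"
      by (cases "a = c") simp_all
    then have "l2 = l1"
      using phase[OF l1(1)] by (metis mult.assoc mult.commute mult_1_right)
    then show ?thesis
      using image l1(1) by (auto simp: algebra_simps)
  qed
  then show ?thesis by (simp add: e_def)
qed

theorem mainTheorem4:
  fixes E :: "'n::finite \<Rightarrow> 'n \<Rightarrow> bool"
    and a b c \<alpha> \<beta> \<gamma> :: 'n
    and \<tau> :: real
  assumes "simple_graph E"
    and "pair_pst E a b \<alpha> \<beta> \<tau>"
    and "pair_pst E b c \<beta> \<gamma> \<tau>"
  shows "pair_pst E a c \<alpha> \<gamma> \<tau>"
proof -
  obtain l1 where l1: "cmod l1 = 1"
    "transition E \<tau> *v (basis_vec a - basis_vec b) = l1 *s (basis_vec \<alpha> - basis_vec \<beta>)"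
    using assms(2) unfolding pair_pst_def by blast
  obtain l2 where l2: "cmod l2 = 1"
    "transition E \<tau> *v (basis_vec b - basis_vec c) = l2 *s (basis_vec \<beta> - basis_vec \<gamma>)"
    using assms(3) unfolding pair_pst_def by blast
  have "cinner (transition E \<tau> *v v) (transition E \<tau> *v w) = cinner v w" for v w
    using unitary_transition[OF assms(1)] by (rule unitary_cinner)
  from isometry_difference_transfer_trans[OF this l1 l2] show ?thesis
    unfolding pair_pst_def .
qed

end
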